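(* Let $A=(a_{ij})$ be a real $n\times n$ matrix with nonnegative entries, $\mathbf 1=(1,\ldots,1)^{\mathrm T}$, $L=\operatorname{diag}(A\mathbf 1)-A$, let $S$ be the orthogonal projection of $\mathbb R^n$ onto $\mathcal R(L)\oplus\operatorname{span}(\mathbf 1)$, and let $\tilde J$ be the eigenprojection of $L$ corresponding to the eigenvalue $0$. Then $S\tilde J S=\tilde J S$ and $\operatorname{rank}(\tilde J S)=1$.
   Context: $\mathcal R(M)$ and $\mathcal N(M)$ denote range and null space of a matrix $M$. The index $\operatorname{ind}M$ is the smallest $k\ge0$ with $\operatorname{rank}M^{k+1}=\operatorname{rank}M^k$. The eigenprojection of $M$ corresponding to the eigenvalue $0$ is the idempotent matrix $Z$ with $\mathcal R(Z)=\mathcal N(M^{\nu})$ and $\mathcal N(Z)=\mathcal R(M^{\nu})$, where $\nu=\operatorname{ind}M$. *)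

theory Defs
  imports "HOL-Analysis.Analysis"
begin

fun mat_pow :: "real^'n^'n \<Rightarrow> nat \<Rightarrow> real^'n^'n" where
  "mat_pow M 0 = mat 1"
| "mat_pow M (Suc k) = M ** mat_pow M k"

definition mat_range :: "real^'n^'m \<Rightarrow> (real^'m) set" where
  "mat_range M = range (\<lambda>x. M *v x)"

definition mat_null :: "real^'n^'m \<Rightarrow> (real^'n) set" where
  "mat_null M = {x. M *v x = 0}"

definition mat_index :: "real^'n^'n \<Rightarrow> nat" where
  "mat_index M = (LEAST k. rank (mat_pow M (Suc k)) = rank (mat_pow M k))"

definition is_eigenprojection0 :: "real^'n^'n \<Rightarrow> real^'n^'n \<Rightarrow> bool" where
  "is_eigenprojection0 M Z \<longleftrightarrow>
     Z ** Z = Z \<and>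
     mat_range Z = mat_null (mat_pow M (mat_index M)) \<and>
     mat_null Z = mat_range (mat_pow M (mat_index M))"

definition is_orth_proj :: "real^'n^'n \<Rightarrow> (real^'n) set \<Rightarrow> bool" where
  "is_orth_proj P V \<longleftrightarrow> subspace V \<and>
     (\<forall>x. P *v x \<in> V \<and> (\<forall>v\<in>V. (x - P *v x) \<bullet> v = 0))"

definition ones :: "real^'n" where
  "ones = vec 1"

definition laplacian :: "real^'n^'n \<Rightarrow> real^'n^'n" where
  "laplacian A = (\<chi> i j. if i = j then (A *v ones) $ i else 0) - A"

end

theory Submission
  imports Defs
begin

text \<open>
  For \<open>t\<close> at least the largest row sum of \<open>A\<close>, the matrix \<open>I - L/t\<close> is nonexpansive in the
  maximum norm, since it averages the entries of a vector with nonnegative weights. If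
  \<open>L(Lx) = 0\<close> and \<open>y = Lx \<noteq> 0\<close>, its iterates \<open>(I - L/t)^k x = x - (k/t) y\<close> would be unbounded.
  Hence \<open>N(L^2) = N(L)\<close>, the index of \<open>L\<close> is 1, and \<open>J\<close> is the projection onto \<open>N(L)\<close> along
  \<open>R(L)\<close>. As \<open>L 1 = 0\<close>, \<open>J\<close> maps \<open>R(L) + span 1\<close>, the range of \<open>S\<close>, onto \<open>span 1\<close>, which
  \<open>S\<close> fixes; so \<open>SJS = JS\<close> and \<open>R(JS) = span 1\<close>.
\<close>

lemma laplacian_mult_vec_nth:
  "(laplacian A *v z) $ i = (\<Sum>j\<in>UNIV. A$i$j * (z$i - z$j))"
proof -
  have "((\<chi> i j. if i = j then (A *v ones) $ i else 0) *v z) $ i = (\<Sum>j\<in>UNIV. A$i$j) * z$i"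
    by (simp add: ones_def matrix_vector_mult_def if_distrib[where f="\<lambda>c. c * _"] cong: if_cong)
  then have "(laplacian A *v z) $ i = (\<Sum>j\<in>UNIV. A$i$j) * z$i - (\<Sum>j\<in>UNIV. A$i$j * z$j)"
    unfolding laplacian_def matrix_vector_mult_diff_rdistrib by (simp add: matrix_vector_mult_def)
  then show ?thesis
    by (simp add: right_diff_distrib sum_subtractf sum_distrib_right)
qed

lemma laplacian_mult_ones: "laplacian A *v ones = 0"
  by (simp add: vec_eq_iff laplacian_mult_vec_nth ones_def)

lemma ones_neq_zero: "(ones :: real^'n) \<noteq> 0"
  by (simp add: ones_def vec_eq_iff)

lemma laplacian_step_nonexpansive:
  fixes A :: "real^'n^'n"
  assumes nonneg: "\<forall>i j. A $ i $ j \<ge> 0"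
    and row_sum: "(\<Sum>j\<in>UNIV. A$i$j) \<le> t" and "t > 0"
    and bound: "\<forall>j. \<bar>z$j\<bar> \<le> M"
  shows "\<bar>z$i - (laplacian A *v z) $ i / t\<bar> \<le> M"
proof -
  define d where "d = (\<Sum>j\<in>UNIV. A$i$j)"
  define s where "s = (laplacian A *v z) $ i"
  have zi: "\<bar>z$i\<bar> \<le> M" using bound by auto
  have "d * (z$i - M) \<le> s"
    unfolding s_def d_def laplacian_mult_vec_nth sum_distrib_right
    by (rule sum_mono, rule mult_left_mono) (use bound nonneg in \<open>auto simp: abs_le_iff\<close>)
  moreover have "t * (z$i - M) \<le> d * (z$i - M)"
    using row_sum zi unfolding d_def by (intro mult_right_mono_neg) auto
  moreover have "s \<le> d * (z$i + M)"
    unfolding s_def d_def laplacian_mult_vec_nth sum_distrib_right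
    by (rule sum_mono, rule mult_left_mono) (use bound nonneg in \<open>auto simp: abs_le_iff\<close>)
  moreover have "d * (z$i + M) \<le> t * (z$i + M)"
    using row_sum zi unfolding d_def by (intro mult_right_mono) auto
  ultimately have "z$i - M \<le> s / t" "s / t \<le> z$i + M"
    using \<open>t > 0\<close> by (simp_all add: field_simps)
  then show ?thesis unfolding s_def by linarith
qed

lemma laplacian_drift_bounded:
  fixes A :: "real^'n^'n"
  assumes nonneg: "\<forall>i j. A $ i $ j \<ge> 0"
    and null_square: "laplacian A *v (laplacian A *v x) = 0"
    and row_sums: "\<And>i. (\<Sum>j\<in>UNIV. A$i$j) \<le> t" and "t > 0"
  shows "\<bar>x$i - (real k / t) * (laplacian A *v x) $ i\<bar> \<le> norm x"
proof -
  define y where "y = laplacian A *v x"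
  define z where "z k = x - (real k / t) *\<^sub>R y" for k
  have "laplacian A *v z k = y" for k
    using null_square by (simp add: z_def y_def matrix_vector_mult_diff_distrib matrix_vector_mult_scaleR)
  then have step: "z (Suc k) $ j = z k $ j - (laplacian A *v z k) $ j / t" for k j
    using \<open>t > 0\<close> by (simp add: z_def field_simps)
  have "\<forall>j. \<bar>z k $ j\<bar> \<le> norm x" for k
  proof (induction k)
    case 0
    then show ?case by (simp add: z_def component_le_norm_cart)
  next
    case (Suc k)
    then show ?case
      using laplacian_step_nonexpansive[OF nonneg row_sums \<open>t > 0\<close>] step by simp
  qed
  then show ?thesis by (simp add: z_def y_def)
qed

lemma laplacian_null_square:
  fixes A :: "real^'n^'n"
  assumes nonneg: "\<forall>i j. A $ i $ j \<ge> 0"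
    and null_square: "laplacian A *v (laplacian A *v x) = 0"
  shows "laplacian A *v x = 0"
proof (rule ccontr)
  define y where "y = laplacian A *v x"
  assume "laplacian A *v x \<noteq> 0"
  then obtain i where yi: "y $ i \<noteq> 0" by (auto simp: y_def vec_eq_iff)
  define t where "t = 1 + (\<Sum>i\<in>UNIV. \<Sum>j\<in>UNIV. A$i$j)"
  have row_nonneg: "(\<Sum>j\<in>UNIV. A$i$j) \<ge> 0" for i
    using nonneg by (simp add: sum_nonneg)
  have row_sums: "(\<Sum>j\<in>UNIV. A$i$j) \<le> t" for i
    unfolding t_def using member_le_sum[of i UNIV "\<lambda>i. \<Sum>j\<in>UNIV. A$i$j"] row_nonneg by simp
  have "t > 0" unfolding t_def using row_nonneg by (simp add: sum_nonneg add_pos_nonneg)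
  obtain k where k: "2 * t * norm x / \<bar>y$i\<bar> < real k" using reals_Archimedean2 by blast
  have "\<bar>x$i - (real k / t) * y$i\<bar> \<le> norm x"
    using laplacian_drift_bounded[OF nonneg null_square row_sums \<open>t > 0\<close>] by (simp add: y_def)
  moreover have "\<bar>x$i\<bar> \<le> norm x" by (simp add: component_le_norm_cart)
  ultimately have "real k * \<bar>y$i\<bar> / t \<le> 2 * norm x"
    using \<open>t > 0\<close> by (simp add: abs_mult)
  with k yi \<open>t > 0\<close> show False by (simp add: field_simps)
qed

lemma rank_mult_self_eq:
  fixes M :: "real^'n^'n"
  assumes null_square: "\<And>x. M *v (M *v x) = 0 \<Longrightarrow> M *v x = 0"
  shows "rank (M ** M) = rank M"
proof -
  have lin: "linear ((*v) M)" by (rule matrix_vector_mul_linear)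
  have range_square: "range ((*v) (M ** M)) = (*v) M ` range ((*v) M)"
    by (auto simp: matrix_vector_mul_assoc[symmetric] image_iff)
  have span_range: "span (range ((*v) M)) = range ((*v) M)"
    using span_linear_image[OF lin, of UNIV] by simp
  have "inj_on ((*v) M) (range ((*v) M))"
  proof (rule inj_onI, clarify)
    fix a b assume "M *v (M *v a) = M *v (M *v b)"
    then have "M *v (M *v (a - b)) = 0" by (simp add: matrix_vector_mult_diff_distrib)
    then have "M *v (a - b) = 0" by (rule null_square)
    then show "M *v a = M *v b" by (simp add: matrix_vector_mult_diff_distrib)
  qed
  then have "dim ((*v) M ` range ((*v) M)) = dim (range ((*v) M))"
    by (intro dim_image_eq[OF lin]) (simp add: span_range)
  then show ?thesis by (simp add: rank_dim_range range_square)
qed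

lemma mat_index_eq_1:
  fixes M :: "real^'n^'n"
  assumes "rank (M ** M) = rank M" and "M *v v = 0" "v \<noteq> 0"
  shows "mat_index M = 1"
  unfolding mat_index_def
proof (rule Least_equality)
  show "rank (mat_pow M (Suc 1)) = rank (mat_pow M 1)"
    using assms(1) by (simp add: numeral_2_eq_2)
next
  fix k assume k: "rank (mat_pow M (Suc k)) = rank (mat_pow M k)"
  have "\<not> inj ((*v) M)"
    using assms(2,3) by (metis injD matrix_vector_mult_0_right)
  then have "rank M \<noteq> rank (mat_pow M 0)" by (auto simp: rank_I full_rank_injective)
  with k show "1 \<le> k" by (cases k) auto
qed

lemma laplacian_index:
  fixes A :: "real^'n^'n"
  assumes "\<forall>i j. A $ i $ j \<ge> 0"
  shows "mat_index (laplacian A) = 1"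
  using rank_mult_self_eq[OF laplacian_null_square[OF assms]] laplacian_mult_ones ones_neq_zero
  by (rule mat_index_eq_1)

lemma idempotent_mult_vec_range:
  assumes "Z ** Z = Z" and "v \<in> mat_range Z"
  shows "Z *v v = v"
  using assms by (auto simp: mat_range_def matrix_vector_mul_assoc)

lemma orth_proj_fixes:
  assumes "is_orth_proj P V" and "v \<in> V"
  shows "P *v v = v"
proof -
  have "v - P *v v \<in> V"
    using assms by (simp add: is_orth_proj_def subspace_diff)
  then have "(v - P *v v) \<bullet> (v - P *v v) = 0"
    using assms(1) unfolding is_orth_proj_def by blast
  then show ?thesis by simp
qed

lemma orth_proj_range:
  assumes "is_orth_proj P V"
  shows "range ((*v) P) = V"
proof
  show "range ((*v) P) \<subseteq> V"
    using assms by (auto simp: is_orth_proj_def)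
  show "V \<subseteq> range ((*v) P)"
    using orth_proj_fixes[OF assms] by (metis rangeI subsetI)
qed

lemma span_subset_mat_range_plus: "span {u} \<subseteq> mat_range M + span {u}"
proof -
  have "0 \<in> mat_range M"
    by (metis mat_range_def matrix_vector_mult_0_right rangeI)
  then show ?thesis using set_plus_intro by fastforce
qed

lemma projection_image_range_plus_null:
  fixes M Z :: "real^'n^'n"
  assumes "Z ** Z = Z" "mat_range Z = mat_null M" "mat_null Z = mat_range M"
    and "M *v u = 0"
  shows "(*v) Z ` (mat_range M + span {u}) = span {u}"
proof
  have Zu: "Z *v u = u"
    using assms(1,2,4) by (simp add: idempotent_mult_vec_range mat_null_def)
  have "Z *v (M *v a + c *\<^sub>R u) = c *\<^sub>R u" for a c
    using assms(3) Zu
    by (auto simp: mat_null_def mat_range_def matrix_vector_right_distrib matrix_vector_mult_scaleR)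
  then show "(*v) Z ` (mat_range M + span {u}) \<subseteq> span {u}"
    by (auto simp: mat_range_def span_singleton elim!: set_plus_elim)
  show "span {u} \<subseteq> (*v) Z ` (mat_range M + span {u})"
  proof
    fix v assume "v \<in> span {u}"
    then have "Z *v v = v"
      using Zu by (auto simp: span_singleton matrix_vector_mult_scaleR)
    with \<open>v \<in> span {u}\<close> show "v \<in> (*v) Z ` (mat_range M + span {u})"
      using span_subset_mat_range_plus by (metis image_eqI subsetD)
  qed
qed

theorem lemmaA2:
  fixes A S J :: "real^'n^'n"
  assumes nonneg: "\<forall>i j. A $ i $ j \<ge> 0"
    and S: "is_orth_proj S (mat_range (laplacian A) + span {ones})"
    and J: "is_eigenprojection0 (laplacian A) J"
  shows "S ** J ** S = J ** S \<and> rank (J ** S) = 1"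
proof -
  define V where "V = mat_range (laplacian A) + span {ones}"
  have "J ** J = J" "mat_range J = mat_null (laplacian A)" "mat_null J = mat_range (laplacian A)"
    using J laplacian_index[OF nonneg] by (simp_all add: is_eigenprojection0_def)
  then have JV: "(*v) J ` V = span {ones}"
    unfolding V_def by (rule projection_image_range_plus_null[OF _ _ _ laplacian_mult_ones])
  have SV: "range ((*v) S) = V"
    using orth_proj_range S by (simp add: V_def)
  have "range ((*v) (J ** S)) = (*v) J ` range ((*v) S)"
    by (simp add: image_image matrix_vector_mul_assoc[symmetric])
  then have range_JS: "range ((*v) (J ** S)) = span {ones}"
    using JV SV by simp
  have ones_V: "span {ones} \<subseteq> V"
    unfolding V_def by (rule span_subset_mat_range_plus)
  have "(S ** J ** S) *v x = (J ** S) *v x" for x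
  proof -
    have "(J ** S) *v x \<in> V"
      using range_JS ones_V by blast
    then show ?thesis
      using orth_proj_fixes S by (simp add: V_def matrix_vector_mul_assoc[symmetric])
  qed
  then show ?thesis
    by (simp add: matrix_eq rank_dim_range range_JS ones_neq_zero)
qed

end
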